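(* Let $d\ge 1$ and let $D=\{(x_i,y_i)\mid i=1,\dots,n\}$ be a finite dataset with $x_i\in\mathbb{R}^d$, $y_i\in\mathbb{R}$, such that for all $i,j$, $y_i\neq y_j$ implies $x_i\neq x_j$. Then there exists a convex-area-wise linear function $f\in CALF(\mathbb{R}^d)$ fitting $D$, i.e. with $f(x_i)=y_i$ for all $i=1,\dots,n$. Furthermore, there exist $d\ge 1$ and a function $f:\mathbb{R}^d\to\mathbb{R}$ such that $f\in CALF(\mathbb{R}^d)$ but $f$ is not a PLDC function.
   Context: A linear (affine) function on $\mathbb{R}^d$ is one of the form $f(x)=\beta_0+\beta_1x_1+\dots+\beta_dx_d$. A convex area is a set of the form $C=\bigcap_{k=1}^{m}\{x\in\mathbb{R}^d\mid \alpha_k\cdot x+\gamma_k\le 0\}$ with $m\ge 1$, $\alpha_k\in\mathbb{R}^d$, $\gamma_k\in\mathbb{R}$. Convex-area-wise linear function (CALF): for $\Omega\subseteq\mathbb{R}^d$, let $H=\{(f_i,C_i)\mid 0\le i\le M\}$ ($M\ge 0$ an integer) where each $f_i$ is a linear function, $C_1,\dots,C_M$ are pairwise disjoint convex areas, and $C_0=\Omega\setminus\bigcup_{i=1}^M C_i$. The function $f_H:\Omega\to\mathbb{R}$, $f_H(x)=\sum_{i=0}^M I_i(x)f_i(x)$, where $I_i$ is the indicator function of $C_i$, is called a convex-area-wise linear function; $CALF(\Omega)$ denotes the set of all such functions (over all choices of $M$ and $H$). PLDC function: a function $f:\mathbb{R}^d\to\mathbb{R}$ is PLDC if there exist $K\in\mathbb{Z}^+$,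 $\alpha_k,\beta_k\in\mathbb{R}^d$ and $c_k,c'_k\in\mathbb{R}$ ($k=1,\dots,K$) such that $f(x)=\max_{1\le k\le K}\{\alpha_k\cdot x+c_k\}-\max_{1\le k\le K}\{\beta_k\cdot x+c'_k\}$ for all $x$. *)

theory Defs
  imports Main "HOL-Library.Indicator_Function"
begin

text \<open>Points of R^d are represented as functions nat => real vanishing
  from index d on (so the dimension d can be quantified inside formulas).\<close>

definition Rd :: "nat \<Rightarrow> (nat \<Rightarrow> real) set" where
  "Rd d = {x. \<forall>i\<ge>d. x i = 0}"

definition lin_fun :: "nat \<Rightarrow> real \<Rightarrow> (nat \<Rightarrow> real) \<Rightarrow> (nat \<Rightarrow> real) \<Rightarrow> real" where
  "lin_fun d b0 b x = b0 + (\<Sum>i<d. b i * x i)"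

definition convex_area :: "nat \<Rightarrow> (nat \<Rightarrow> real) set \<Rightarrow> bool" where
  "convex_area d C \<longleftrightarrow> (\<exists>m::nat. \<exists>(\<alpha>::nat \<Rightarrow> nat \<Rightarrow> real) (\<gamma>::nat \<Rightarrow> real).
      m \<ge> 1 \<and> C = {x \<in> Rd d. \<forall>k\<in>{1..m}. (\<Sum>i<d. \<alpha> k i * x i) + \<gamma> k \<le> 0})"

definition CALF :: "nat \<Rightarrow> (nat \<Rightarrow> real) set \<Rightarrow> ((nat \<Rightarrow> real) \<Rightarrow> real) \<Rightarrow> bool" where
  "CALF d \<Omega> f \<longleftrightarrow> (\<exists>(M::nat) (b0::nat \<Rightarrow> real) (b::nat \<Rightarrow> nat \<Rightarrow> real)
        (C::nat \<Rightarrow> (nat \<Rightarrow> real) set).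
      (\<forall>i\<in>{1..M}. convex_area d (C i)) \<and>
      (\<forall>i\<in>{1..M}. \<forall>j\<in>{1..M}. i \<noteq> j \<longrightarrow> C i \<inter> C j = {}) \<and>
      C 0 = \<Omega> - (\<Union>i\<in>{1..M}. C i) \<and>
      (\<forall>x\<in>\<Omega>. f x = (\<Sum>i\<in>{0..M}. indicator (C i) x * lin_fun d (b0 i) (b i) x)))"

definition PLDC :: "nat \<Rightarrow> ((nat \<Rightarrow> real) \<Rightarrow> real) \<Rightarrow> bool" where
  "PLDC d f \<longleftrightarrow> (\<exists>(K::nat) (\<alpha>::nat \<Rightarrow> nat \<Rightarrow> real) (\<beta>::nat \<Rightarrow> nat \<Rightarrow> real)
        (c::nat \<Rightarrow> real) (c'::nat \<Rightarrow> real).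
      K \<ge> 1 \<and>
      (\<forall>x\<in>Rd d. f x = Max ((\<lambda>k. (\<Sum>i<d. \<alpha> k i * x i) + c k) ` {1..K})
                     - Max ((\<lambda>k. (\<Sum>i<d. \<beta> k i * x i) + c' k) ` {1..K})))"

end

theory Submission
  imports Defs "HOL-Analysis.Analysis"
begin

(* A consistent finite data set is fitted by the function that takes the prescribed value
   on each data point and 0 elsewhere: it is a CALF because a point of R^d is the convex
   area cut out by the 2d half-spaces x_j <= p_j and x_j >= p_j.
   On the other hand, a PLDC function is continuous, being a difference of maxima of finitely many
   affine functions, whereas the indicator of the half-space x_0 <= 0 is a CALF with a jump. *)

lemma sum_lessThan_delta:
  fixes x :: "nat \<Rightarrow> 'a::semiring_0"
  shows "j < d \<Longrightarrow> (\<Sum>i<d. (if i = j then c else 0) * x i) = c * x j"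
  by (simp add: if_distrib[of "\<lambda>a. a * _"] cong: if_cong)

lemma convex_area_halfspace: "convex_area d {x \<in> Rd d. (\<Sum>i<d. a i * x i) + c \<le> 0}"
  unfolding convex_area_def by (intro exI[of _ 1] exI[of _ "\<lambda>_. a"] exI[of _ "\<lambda>_. c"]) auto

lemma convex_area_singleton:
  assumes "d \<ge> 1" and p: "p \<in> Rd d"
  shows "convex_area d {p}"
proof -
  \<comment> \<open>Constraints k and k + d bound coordinate k - 1 from above and from below.\<close>
  define \<sigma> where "\<sigma> k = (if k \<le> d then 1 else -1 :: real)" for k
  define \<alpha> where "\<alpha> k i = (if i = (k - 1) mod d then \<sigma> k else 0)" for k i
  define \<gamma> where "\<gamma> k = - \<sigma> k * p ((k - 1) mod d)" for k
  have constraint: "(\<Sum>i<d. \<alpha> k i * x i) + \<gamma> k = \<sigma> k * (x ((k - 1) mod d) - p ((k - 1) mod d))"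
    for k x
  proof -
    have "(k - 1) mod d < d" using \<open>d \<ge> 1\<close> by simp
    then have "(\<Sum>i<d. \<alpha> k i * x i) = \<sigma> k * x ((k - 1) mod d)"
      unfolding \<alpha>_def by (rule sum_lessThan_delta)
    then show ?thesis by (simp add: \<gamma>_def algebra_simps)
  qed
  have "{p} = {x \<in> Rd d. \<forall>k\<in>{1..2*d}. (\<Sum>i<d. \<alpha> k i * x i) + \<gamma> k \<le> 0}"
  proof (intro set_eqI iffI)
    fix x assume "x \<in> {x \<in> Rd d. \<forall>k\<in>{1..2*d}. (\<Sum>i<d. \<alpha> k i * x i) + \<gamma> k \<le> 0}"
    then have x: "x \<in> Rd d"
      and le: "\<And>k. k \<in> {1..2*d} \<Longrightarrow> \<sigma> k * (x ((k - 1) mod d) - p ((k - 1) mod d)) \<le> 0"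
      by (auto simp: constraint)
    have "x j = p j" if "j < d" for j
      using le[of "j + 1"] le[of "j + 1 + d"] that by (simp add: \<sigma>_def)
    with x p show "x \<in> {p}" by (simp add: Rd_def fun_eq_iff) (metis not_le)
  qed (use p in \<open>simp add: constraint\<close>)
  then show ?thesis
    unfolding convex_area_def using \<open>d \<ge> 1\<close>
    by (intro exI[of _ "2*d"] exI[of _ \<alpha>] exI[of _ \<gamma>]) auto
qed

lemma CALF_indicator_convex_area:
  assumes "convex_area d C"
  shows "CALF d \<Omega> (indicator C)"
proof -
  define C' where "C' i = (if i = 0 then \<Omega> - C else C)" for i :: nat
  define b0 where "b0 i = (if i = 0 then 0 else 1 :: real)" for i :: nat
  show ?thesis
    unfolding CALF_def
    by (intro exI[of _ 1] exI[of _ b0] exI[of _ "\<lambda>_ _. 0"] exI[of _ C'] conjI)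
      (use assms in \<open>auto simp: C'_def b0_def lin_fun_def indicator_def\<close>)
qed

lemma CALF_finite_support:
  assumes "d \<ge> 1" "finite S" "S \<subseteq> Rd d"
  shows "CALF d \<Omega> (\<lambda>x. if x \<in> S then g x else 0)"
proof -
  obtain e where e: "bij_betw e {1..card S} S"
    using ex_bij_betw_nat_finite_1[OF \<open>finite S\<close>] by blast
  define C where "C i = (if i = 0 then \<Omega> - S else {e i})" for i
  define b0 where "b0 i = (if i = 0 then 0 else g (e i))" for i
  have pieces: "(\<Sum>i\<in>{0..card S}. indicator (C i) x * lin_fun d (b0 i) (\<lambda>_. 0) x)
      = (if x \<in> S then g x else 0)" for x
  proof -
    define F where "F i = indicator (C i) x * lin_fun d (b0 i) (\<lambda>_. 0) x" for i
    have "(\<Sum>i\<in>{0..card S}. F i) = F 0 + (\<Sum>i\<in>{1..card S}. F i)"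
      by (simp add: sum.atLeast_Suc_atMost)
    also have "\<dots> = (\<Sum>i\<in>{1..card S}. indicator {e i} x * g (e i))"
      by (auto simp: F_def C_def b0_def lin_fun_def simp del: sum_mult_indicator intro!: sum.cong)
    also have "\<dots> = (\<Sum>s\<in>S. indicator {s} x * g s)"
      using sum.reindex_bij_betw[OF e, of "\<lambda>s. indicator {s} x * g s"] .
    also have "\<dots> = (if x \<in> S then g x else 0)"
      using \<open>finite S\<close> by (simp add: indicator_def)
    finally show ?thesis unfolding F_def .
  qed
  have "e ` {1..card S} = S" "inj_on e {1..card S}"
    using e by (auto simp: bij_betw_def)
  then have "C 0 = \<Omega> - (\<Union>i\<in>{1..card S}. C i)"
    by (auto simp: C_def)
  moreover have "\<forall>i\<in>{1..card S}. convex_area d (C i)"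
  proof
    fix i assume "i \<in> {1..card S}"
    then have "e i \<in> Rd d" "i \<noteq> 0"
      using bij_betw_apply[OF e] \<open>S \<subseteq> Rd d\<close> by auto
    then show "convex_area d (C i)"
      unfolding C_def using convex_area_singleton \<open>d \<ge> 1\<close> by simp
  qed
  moreover have "\<forall>i\<in>{1..card S}. \<forall>j\<in>{1..card S}. i \<noteq> j \<longrightarrow> C i \<inter> C j = {}"
    using \<open>inj_on e {1..card S}\<close> by (auto simp: C_def inj_on_eq_iff)
  ultimately show ?thesis
    unfolding CALF_def using pieces
    by (intro exI[of _ "card S"] exI[of _ b0] exI[of _ "\<lambda>_ _. 0"] exI[of _ C]) simp
qed

lemma CALF_interpolant_exists:
  fixes xs :: "'i \<Rightarrow> nat \<Rightarrow> real" and ys :: "'i \<Rightarrow> real"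
  assumes "d \<ge> 1" "finite I" "\<forall>i\<in>I. xs i \<in> Rd d"
    and consistent: "\<forall>i\<in>I. \<forall>j\<in>I. xs i = xs j \<longrightarrow> ys i = ys j"
  shows "\<exists>f. CALF d \<Omega> f \<and> (\<forall>i\<in>I. f (xs i) = ys i)"
proof -
  define g where "g x = ys (SOME i. i \<in> I \<and> xs i = x)" for x
  have "g (xs j) = ys j" if "j \<in> I" for j
    unfolding g_def by (rule someI2[of _ j]) (use that consistent in blast)+
  moreover have "CALF d \<Omega> (\<lambda>x. if x \<in> xs ` I then g x else 0)"
    using assms by (intro CALF_finite_support) blast+
  ultimately show ?thesis
    by (intro exI[of _ "\<lambda>x. if x \<in> xs ` I then g x else 0"]) simp
qed

lemma continuous_on_Max:
  fixes f :: "'i \<Rightarrow> 'a::topological_space \<Rightarrow> 'b::linorder_topology"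
  assumes "finite K" "K \<noteq> {}" "\<And>k. k \<in> K \<Longrightarrow> continuous_on S (f k)"
  shows "continuous_on S (\<lambda>x. Max ((\<lambda>k. f k x) ` K))"
  using assms
proof (induction K rule: finite_ne_induct)
  case (singleton k)
  then show ?case by simp
next
  case (insert k K)
  then show ?case by (simp add: continuous_on_max)
qed

(* Continuity refers to the product topology on nat => real, in which coordinates are
   continuous. *)
lemma PLDC_continuous_on:
  assumes "PLDC d f"
  shows "continuous_on (Rd d) f"
proof -
  obtain K :: nat and \<alpha> \<beta> :: "nat \<Rightarrow> nat \<Rightarrow> real" and c c' :: "nat \<Rightarrow> real"
    where K: "K \<ge> 1" and f: "\<forall>x\<in>Rd d.
      f x = Max ((\<lambda>k. (\<Sum>i<d. \<alpha> k i * x i) + c k) ` {1..K})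
          - Max ((\<lambda>k. (\<Sum>i<d. \<beta> k i * x i) + c' k) ` {1..K})"
    using assms unfolding PLDC_def by blast
  have affine: "continuous_on (Rd d) (\<lambda>x. (\<Sum>i<d. a i * x i) + b)" for a :: "nat \<Rightarrow> real" and b
    by (intro continuous_intros continuous_on_subset[OF continuous_on_product_coordinates]) auto
  have "continuous_on (Rd d) (\<lambda>x. Max ((\<lambda>k. (\<Sum>i<d. \<alpha> k i * x i) + c k) ` {1..K})
          - Max ((\<lambda>k. (\<Sum>i<d. \<beta> k i * x i) + c' k) ` {1..K}))"
    using K by (intro continuous_on_diff continuous_on_Max affine) auto
  then show ?thesis
    by (rule continuous_on_eq) (use f in auto)
qed

lemma indicator_halfline_not_continuous:
  "\<not> continuous_on (Rd 1) (indicator {x \<in> Rd 1. x 0 \<le> 0} :: _ \<Rightarrow> real)"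
proof
  define line where "line t = (\<lambda>i::nat. if i = 0 then t else 0 :: real)" for t
  assume cont: "continuous_on (Rd 1) (indicator {x \<in> Rd 1. x 0 \<le> 0} :: _ \<Rightarrow> real)"
  have "continuous_on {0..1} line"
  proof (rule continuous_on_coordinatewise_then_product)
    show "continuous_on {0..1} (\<lambda>t. line t i)" for i
      by (cases "i = 0") (simp_all add: line_def continuous_on_id)
  qed
  moreover have "line ` {0..1} \<subseteq> Rd 1"
    by (auto simp: line_def Rd_def)
  ultimately have "continuous_on {0..1} (indicator {x \<in> Rd 1. x 0 \<le> 0} \<circ> line :: _ \<Rightarrow> real)"
    using continuous_on_compose continuous_on_subset[OF cont] by blast
  also have "indicator {x \<in> Rd 1. x 0 \<le> 0} \<circ> line = (\<lambda>t::real. if t \<le> 0 then 1 else 0 :: real)"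
    by (auto simp: fun_eq_iff line_def Rd_def)
  finally have "continuous_on {0..1} (\<lambda>t::real. if t \<le> 0 then 1 else 0 :: real)" .
  from IVT2'[OF _ _ _ this, of "1/2"] show False
    by (simp split: if_splits)
qed

theorem theorem1:
  shows "(\<forall>(d::nat) (n::nat) (xs::nat \<Rightarrow> nat \<Rightarrow> real) (ys::nat \<Rightarrow> real).
            d \<ge> 1 \<longrightarrow> (\<forall>i\<in>{1..n}. xs i \<in> Rd d) \<longrightarrow>
            (\<forall>i\<in>{1..n}. \<forall>j\<in>{1..n}. ys i \<noteq> ys j \<longrightarrow> xs i \<noteq> xs j) \<longrightarrow>
            (\<exists>f. CALF d (Rd d) f \<and> (\<forall>i\<in>{1..n}. f (xs i) = ys i)))
       \<and> (\<exists>(d::nat) f. d \<ge> 1 \<and> CALF d (Rd d) f \<and> \<not> PLDC d f)"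
proof (intro conjI allI impI)
  fix d n :: nat and xs :: "nat \<Rightarrow> nat \<Rightarrow> real" and ys :: "nat \<Rightarrow> real"
  assume "d \<ge> 1" "\<forall>i\<in>{1..n}. xs i \<in> Rd d"
    and "\<forall>i\<in>{1..n}. \<forall>j\<in>{1..n}. ys i \<noteq> ys j \<longrightarrow> xs i \<noteq> xs j"
  then show "\<exists>f. CALF d (Rd d) f \<and> (\<forall>i\<in>{1..n}. f (xs i) = ys i)"
    by (intro CALF_interpolant_exists) auto
next
  let ?H = "{x \<in> Rd 1. x 0 \<le> 0}"
  have "convex_area 1 ?H"
    using convex_area_halfspace[of 1 "\<lambda>_. 1" 0] by simp
  then have "CALF 1 (Rd 1) (indicator ?H)"
    by (rule CALF_indicator_convex_area)
  moreover have "\<not> PLDC 1 (indicator ?H :: _ \<Rightarrow> real)"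
    using PLDC_continuous_on[of 1] indicator_halfline_not_continuous by blast
  ultimately show "\<exists>(d::nat) f. d \<ge> 1 \<and> CALF d (Rd d) f \<and> \<not> PLDC d f"
    by (intro exI[of _ 1] exI[of _ "indicator ?H"]) simp
qed

end
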